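(* Let $A$ be a quantifier-free formula of $\mathbf{L}$ (i.e. a formula of $\mathbf{L_1}$). If $A$ is a theorem of $\mathbf{L}$, then $\vdash_H A$. That is, $\mathbf{L}$ is a conservative extension of the Hilbert-type $\mathbf{L_1}$.
   Context: Formulas of $\mathbf{L_1}$: built from atomic formulas $\epsilon ab$ ($a,b$ name variables, possibly equal) with primitive connectives $\vee,\sim$; $\wedge,\supset,\equiv$ defined as usual. $\vdash_H A$: $A$ belongs to the smallest set containing all instances of classical propositional tautologies and all formulas $\epsilon ab\supset\epsilon aa$, $(\epsilon ab\wedge\epsilon bc)\supset\epsilon ac$, $(\epsilon ab\wedge\epsilon bb)\supset\epsilon ba$, closed under modus ponens. Leśniewski's elementary ontology $\mathbf{L}$: the first-order theory (in classical first-order predicate logic without equality) whose language has the name variables as individual variables and a single binary predicate $\epsilon$, with the axiom (universal closure of) $\epsilon ab\equiv\big(\exists x(\epsilon xa\wedge\epsilon xb)\wedge\forall x\forall y(\epsilon xa\wedge\epsilon ya\supset\epsilon xy)\big)$. Formulas of $\mathbf{L_1}$ are exactly the quantifier-free formulas of $\mathbf{L}$. *)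

theory Defs
  imports Main
begin

datatype form = Eps nat nat | Neg form | Disj form form | Ex nat form

definition Imp :: "form \<Rightarrow> form \<Rightarrow> form" where "Imp A B = Disj (Neg A) B"
definition Conj :: "form \<Rightarrow> form \<Rightarrow> form" where "Conj A B = Neg (Disj (Neg A) (Neg B))"
definition Iff :: "form \<Rightarrow> form \<Rightarrow> form" where "Iff A B = Conj (Imp A B) (Imp B A)"
definition All :: "nat \<Rightarrow> form \<Rightarrow> form" where "All x A = Neg (Ex x (Neg A))"

fun qfree :: "form \<Rightarrow> bool" where
  "qfree (Eps a b) = True"
| "qfree (Neg A) = qfree A"
| "qfree (Disj A B) = (qfree A \<and> qfree B)"
| "qfree (Ex x A) = False"

fun free :: "form \<Rightarrow> nat set" where
  "free (Eps a b) = {a, b}"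
| "free (Neg A) = free A"
| "free (Disj A B) = free A \<union> free B"
| "free (Ex x A) = free A - {x}"

fun subst :: "nat \<Rightarrow> nat \<Rightarrow> form \<Rightarrow> form" where
  "subst y x (Eps a b) = Eps (if a = x then y else a) (if b = x then y else b)"
| "subst y x (Neg A) = Neg (subst y x A)"
| "subst y x (Disj A B) = Disj (subst y x A) (subst y x B)"
| "subst y x (Ex z A) = (if z = x then Ex z A else Ex z (subst y x A))"

fun free_for :: "nat \<Rightarrow> nat \<Rightarrow> form \<Rightarrow> bool" where
  "free_for y x (Eps a b) = True"
| "free_for y x (Neg A) = free_for y x A"
| "free_for y x (Disj A B) = (free_for y x A \<and> free_for y x B)"
| "free_for y x (Ex z A) = (z = x \<or> x \<notin> free A \<or> (z \<noteq> y \<and> free_for y x A))"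

datatype pform = PVar nat | PNeg pform | PDisj pform pform

fun peval :: "(nat \<Rightarrow> bool) \<Rightarrow> pform \<Rightarrow> bool" where
  "peval v (PVar n) = v n"
| "peval v (PNeg P) = (\<not> peval v P)"
| "peval v (PDisj P Q) = (peval v P \<or> peval v Q)"

definition ptaut :: "pform \<Rightarrow> bool" where "ptaut P \<longleftrightarrow> (\<forall>v. peval v P)"

fun inst :: "(nat \<Rightarrow> form) \<Rightarrow> pform \<Rightarrow> form" where
  "inst \<sigma> (PVar n) = \<sigma> n"
| "inst \<sigma> (PNeg P) = Neg (inst \<sigma> P)"
| "inst \<sigma> (PDisj P Q) = Disj (inst \<sigma> P) (inst \<sigma> Q)"

definition taut_inst :: "form \<Rightarrow> bool" where
  "taut_inst A \<longleftrightarrow> (\<exists>P \<sigma>. ptaut P \<and> A = inst \<sigma> P)"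

inductive H :: "form \<Rightarrow> bool" where
  H_taut: "qfree A \<Longrightarrow> taut_inst A \<Longrightarrow> H A"
| H_ax1: "H (Imp (Eps a b) (Eps a a))"
| H_ax2: "H (Imp (Conj (Eps a b) (Eps b c)) (Eps a c))"
| H_ax3: "H (Imp (Conj (Eps a b) (Eps b b)) (Eps b a))"
| H_mp: "H A \<Longrightarrow> H (Imp A B) \<Longrightarrow> H B"

definition onto_ax :: "nat \<Rightarrow> nat \<Rightarrow> nat \<Rightarrow> nat \<Rightarrow> form" where
  "onto_ax a b x y = Iff (Eps a b)
     (Conj (Ex x (Conj (Eps x a) (Eps x b)))
           (All x (All y (Imp (Conj (Eps x a) (Eps y a)) (Eps x y)))))"

inductive thmL :: "form \<Rightarrow> bool" where
  L_taut: "taut_inst A \<Longrightarrow> thmL A"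
| L_inst: "free_for y x A \<Longrightarrow> thmL (Imp (All x A) (subst y x A))"
| L_allimp: "x \<notin> free A \<Longrightarrow> thmL (Imp (All x (Imp A B)) (Imp A (All x B)))"
| L_onto: "x \<noteq> y \<Longrightarrow> x \<notin> {a, b} \<Longrightarrow> y \<notin> {a, b} \<Longrightarrow> thmL (onto_ax a b x y)"
| L_mp: "thmL A \<Longrightarrow> thmL (Imp A B) \<Longrightarrow> thmL B"
| L_gen: "thmL A \<Longrightarrow> thmL (All x A)"

end

theory Submission
  imports Defs "HOL-Library.Nat_Bijection"
begin

text \<open>
  Every theorem of L holds in every model of the ontology axiom. The sets over any type, with
  X \<epsilon> Y meaning that X is a singleton whose element lies in Y, form such a model, and every
  relation r satisfying the three axioms of L1 is the pullback of this model along a suitable map: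
  send a name to the set of the classes of the individuals under it, padded by two fresh points
  when the name is not itself an individual. Hence a quantifier-free theorem of L holds in every
  such r. Restricted to the finitely many variables of the formula, this says that finitely many
  instances of the L1 axioms tautologically imply it, so it is derivable in H.
\<close>

fun eval :: "('d \<Rightarrow> 'd \<Rightarrow> bool) \<Rightarrow> (nat \<Rightarrow> 'd) \<Rightarrow> form \<Rightarrow> bool" where
  "eval R s (Eps a b) = R (s a) (s b)"
| "eval R s (Neg A) = (\<not> eval R s A)"
| "eval R s (Disj A B) = (eval R s A \<or> eval R s B)"
| "eval R s (Ex x A) = (\<exists>d. eval R (s(x := d)) A)"

lemma eval_derived [simp]:
  "eval R s (Imp A B) = (eval R s A \<longrightarrow> eval R s B)"
  "eval R s (Conj A B) = (eval R s A \<and> eval R s B)"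
  "eval R s (Iff A B) = (eval R s A \<longleftrightarrow> eval R s B)"
  "eval R s (All x A) = (\<forall>d. eval R (s(x := d)) A)"
  by (auto simp: Imp_def Conj_def Iff_def All_def)

lemma finite_free: "finite (free A)"
  by (induction A) auto

lemma eval_cong: "\<forall>v\<in>free A. s v = s' v \<Longrightarrow> eval R s A = eval R s' A"
proof (induction A arbitrary: s s')
  case (Ex x A)
  then have "eval R (s(x := d)) A = eval R (s'(x := d)) A" for d
    by (intro Ex.IH) auto
  then show ?case by simp
qed (simp_all, blast)

lemma eval_qfree_cong:
  assumes "qfree A" and "\<forall>a\<in>free A. \<forall>b\<in>free A. R (s a) (s b) = R' (s' a) (s' b)"
  shows "eval R s A = eval R' s' A"
  using assms by (induction A) auto

lemma subst_nonfree: "x \<notin> free A \<Longrightarrow> subst y x A = A"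
  by (induction A) auto

lemma eval_subst: "free_for y x A \<Longrightarrow> eval R s (subst y x A) = eval R (s(x := s y)) A"
proof (induction A arbitrary: s)
  case (Ex z A)
  consider "z = x \<or> x \<notin> free (Ex z A)" | "z \<noteq> x" "x \<in> free A" "z \<noteq> y" "free_for y x A"
    using Ex.prems by auto
  then show ?case
  proof cases
    case 1
    then have "subst y x (Ex z A) = Ex z A"
      by (auto simp: subst_nonfree)
    moreover have "eval R s (Ex z A) = eval R (s(x := s y)) (Ex z A)"
      using 1 by (intro eval_cong) auto
    ultimately show ?thesis by metis
  next
    case 2
    have "eval R (s(z := d)) (subst y x A) = eval R (s(x := s y, z := d)) A" for d
    proof -
      have "(s(z := d))(x := (s(z := d)) y) = s(x := s y, z := d)"
        using 2 by (auto simp: fun_eq_iff)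
      then show ?thesis
        using Ex.IH[OF \<open>free_for y x A\<close>, of "s(z := d)"] by metis
    qed
    then show ?thesis
      using 2 by (simp only: subst.simps eval.simps if_False)
  qed
qed auto

lemma eval_inst: "eval R s (inst \<sigma> P) = peval (\<lambda>n. eval R s (\<sigma> n)) P"
  by (induction P) auto

definition ontology_model :: "('d \<Rightarrow> 'd \<Rightarrow> bool) \<Rightarrow> bool" where
  "ontology_model R \<longleftrightarrow>
     (\<forall>X Y. R X Y \<longleftrightarrow> (\<exists>Z. R Z X \<and> R Z Y) \<and> (\<forall>Z W. R Z X \<and> R W X \<longrightarrow> R Z W))"

lemma thmL_sound: "thmL A \<Longrightarrow> ontology_model R \<Longrightarrow> eval R s A"
proof (induction A arbitrary: s rule: thmL.induct)
  case (L_taut A)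
  then show ?case by (auto simp: taut_inst_def ptaut_def eval_inst)
next
  case (L_inst y x A)
  then show ?case by (auto simp: eval_subst)
next
  case (L_allimp x A B)
  then have "eval R (s(x := d)) A = eval R s A" for d
    by (intro eval_cong) auto
  then show ?case by auto
next
  case (L_onto x y a b)
  then have "eval R s (onto_ax a b x y) \<longleftrightarrow> (R (s a) (s b) \<longleftrightarrow>
      (\<exists>d. R d (s a) \<and> R d (s b)) \<and> (\<forall>d e. R d (s a) \<and> R e (s a) \<longrightarrow> R d e))"
    by (simp add: onto_ax_def)
  then show ?case
    using L_onto.prems unfolding ontology_model_def by blast
qed auto

definition singleton_mem :: "'u set \<Rightarrow> 'u set \<Rightarrow> bool" where
  "singleton_mem X Y \<longleftrightarrow> (\<exists>i. X = {i} \<and> i \<in> Y)"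

lemma ontology_model_singleton_mem: "ontology_model singleton_mem"
  unfolding ontology_model_def
proof (intro allI iffI)
  fix X Y :: "'u set"
  assume "singleton_mem X Y"
  then obtain i where "X = {i}" "i \<in> Y"
    by (auto simp: singleton_mem_def)
  then show "(\<exists>Z. singleton_mem Z X \<and> singleton_mem Z Y)
      \<and> (\<forall>Z W. singleton_mem Z X \<and> singleton_mem W X \<longrightarrow> singleton_mem Z W)"
    by (auto simp: singleton_mem_def)
next
  fix X Y :: "'u set"
  assume h: "(\<exists>Z. singleton_mem Z X \<and> singleton_mem Z Y)
      \<and> (\<forall>Z W. singleton_mem Z X \<and> singleton_mem W X \<longrightarrow> singleton_mem Z W)"
  then obtain j where j: "j \<in> X" "j \<in> Y"
    by (auto simp: singleton_mem_def)
  have "k = j" if "k \<in> X" for k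
  proof -
    have "singleton_mem {k} {j}"
      using h j \<open>k \<in> X\<close> by (auto simp: singleton_mem_def)
    then show "k = j" by (auto simp: singleton_mem_def)
  qed
  with j have "X = {j}" by blast
  with j show "singleton_mem X Y"
    by (auto simp: singleton_mem_def)
qed

definition H_axioms_on :: "'a set \<Rightarrow> ('a \<Rightarrow> 'a \<Rightarrow> bool) \<Rightarrow> bool" where
  "H_axioms_on V r \<longleftrightarrow>
     (\<forall>a\<in>V. \<forall>b\<in>V. r a b \<longrightarrow> r a a)
     \<and> (\<forall>a\<in>V. \<forall>b\<in>V. \<forall>c\<in>V. r a b \<and> r b c \<longrightarrow> r a c)
     \<and> (\<forall>a\<in>V. \<forall>b\<in>V. r a b \<and> r b b \<longrightarrow> r b a)"

abbreviation H_axioms :: "('a \<Rightarrow> 'a \<Rightarrow> bool) \<Rightarrow> bool" where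
  "H_axioms \<equiv> H_axioms_on UNIV"

lemma H_axioms_restrict: "H_axioms_on V r \<Longrightarrow> H_axioms (\<lambda>a b. a \<in> V \<and> b \<in> V \<and> r a b)"
  unfolding H_axioms_on_def by blast

definition up_set :: "('a \<Rightarrow> 'a \<Rightarrow> bool) \<Rightarrow> 'a \<Rightarrow> 'a set" where
  "up_set r a = {c. r a c}"

definition set_repr :: "('a \<Rightarrow> 'a \<Rightarrow> bool) \<Rightarrow> 'a \<Rightarrow> ('a set + 'a \<times> bool) set" where
  "set_repr r b = Inl ` {up_set r a | a. r a b}
     \<union> (if r b b then {} else {Inr (b, True), Inr (b, False)})"

lemma set_repr_individual:
  assumes "H_axioms r" and "r c c"
  shows "set_repr r c = {Inl (up_set r c)}"
proof -
  have "up_set r a = up_set r c" if "r a c" for a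
  proof -
    have "r c a"
      using assms that unfolding H_axioms_on_def by blast
    then show ?thesis
      using assms that unfolding H_axioms_on_def up_set_def by blast
  qed
  then have "{up_set r a | a. r a c} = {up_set r c}"
    using assms(2) by blast
  then show ?thesis
    using assms(2) by (simp add: set_repr_def)
qed

lemma Inl_mem_set_repr: "Inl u \<in> set_repr r b \<longleftrightarrow> (\<exists>a. r a b \<and> u = up_set r a)"
  by (auto simp: set_repr_def)

lemma singleton_mem_set_repr:
  assumes "H_axioms r"
  shows "singleton_mem (set_repr r c) (set_repr r b) = r c b"
proof (cases "r c c")
  case True
  have "(\<exists>a. r a b \<and> up_set r c = up_set r a) \<longleftrightarrow> r c b"
  proof
    assume "\<exists>a. r a b \<and> up_set r c = up_set r a"
    then obtain a where "r a b" "up_set r c = up_set r a"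
      by blast
    then have "r a c" "r a b"
      using True by (auto simp: up_set_def)
    then show "r c b"
      using assms True unfolding H_axioms_on_def by blast
  qed blast
  then show ?thesis
    using set_repr_individual[OF assms True] by (simp add: singleton_mem_def Inl_mem_set_repr)
next
  case False
  then have "Inr (c, True) \<in> set_repr r c" "Inr (c, False) \<in> set_repr r c"
    by (simp_all add: set_repr_def)
  then have "\<not> singleton_mem (set_repr r c) X" for X
    by (auto simp: singleton_mem_def)
  moreover have "\<not> r c b"
    using assms False unfolding H_axioms_on_def by blast
  ultimately show ?thesis by simp
qed

fun prop_skeleton :: "form \<Rightarrow> pform" where
  "prop_skeleton (Eps a b) = PVar (prod_encode (a, b))"
| "prop_skeleton (Neg A) = PNeg (prop_skeleton A)"
| "prop_skeleton (Disj A B) = PDisj (prop_skeleton A) (prop_skeleton B)"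
| "prop_skeleton (Ex x A) = PVar 0"

definition atom_of :: "nat \<Rightarrow> form" where
  "atom_of n = (case prod_decode n of (a, b) \<Rightarrow> Eps a b)"

lemma inst_prop_skeleton: "qfree A \<Longrightarrow> inst atom_of (prop_skeleton A) = A"
  by (induction A) (auto simp: atom_of_def)

lemma peval_prop_skeleton:
  "qfree A \<Longrightarrow> peval v (prop_skeleton A) = eval (\<lambda>a b. v (prod_encode (a, b))) id A"
  by (induction A) auto

lemma H_valid_qfree:
  assumes "qfree A" and "\<And>r. eval r id A"
  shows "H A"
proof (rule H_taut[OF assms(1)])
  have "ptaut (prop_skeleton A)"
    using assms by (simp add: ptaut_def peval_prop_skeleton)
  then show "taut_inst A"
    unfolding taut_inst_def using inst_prop_skeleton[OF assms(1)] by metis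
qed

fun impls :: "form list \<Rightarrow> form \<Rightarrow> form" where
  "impls [] A = A"
| "impls (B # Bs) A = Imp B (impls Bs A)"

lemma qfree_impls: "(\<And>B. B \<in> set Bs \<Longrightarrow> qfree B) \<Longrightarrow> qfree A \<Longrightarrow> qfree (impls Bs A)"
  by (induction Bs) (auto simp: Imp_def)

lemma eval_impls: "eval R s (impls Bs A) = ((\<forall>B\<in>set Bs. eval R s B) \<longrightarrow> eval R s A)"
  by (induction Bs) auto

lemma H_impls_mp: "H (impls Bs A) \<Longrightarrow> (\<And>B. B \<in> set Bs \<Longrightarrow> H B) \<Longrightarrow> H A"
  by (induction Bs) (auto intro: H_mp)

definition axiom_instances :: "nat list \<Rightarrow> form list" where
  "axiom_instances vs =
       [Imp (Eps a b) (Eps a a). a \<leftarrow> vs, b \<leftarrow> vs]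
     @ [Imp (Conj (Eps a b) (Eps b c)) (Eps a c). a \<leftarrow> vs, b \<leftarrow> vs, c \<leftarrow> vs]
     @ [Imp (Conj (Eps a b) (Eps b b)) (Eps b a). a \<leftarrow> vs, b \<leftarrow> vs]"

lemma H_axiom_instances: "B \<in> set (axiom_instances vs) \<Longrightarrow> H B"
  by (auto simp: axiom_instances_def intro: H_ax1 H_ax2 H_ax3)

lemma qfree_axiom_instances: "B \<in> set (axiom_instances vs) \<Longrightarrow> qfree B"
  by (auto simp: axiom_instances_def Imp_def Conj_def)

lemma H_axioms_on_if_eval_axiom_instances:
  assumes "\<forall>B\<in>set (axiom_instances vs). eval r id B"
  shows "H_axioms_on (set vs) r"
proof -
  have "(r a b \<longrightarrow> r a a) \<and> (r a b \<and> r b c \<longrightarrow> r a c) \<and> (r a b \<and> r b b \<longrightarrow> r b a)"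
    if "a \<in> set vs" "b \<in> set vs" "c \<in> set vs" for a b c
  proof -
    have "Imp (Eps a b) (Eps a a) \<in> set (axiom_instances vs)"
      "Imp (Conj (Eps a b) (Eps b c)) (Eps a c) \<in> set (axiom_instances vs)"
      "Imp (Conj (Eps a b) (Eps b b)) (Eps b a) \<in> set (axiom_instances vs)"
      using that by (auto simp: axiom_instances_def)
    then show ?thesis
      using assms by fastforce
  qed
  then show ?thesis
    unfolding H_axioms_on_def by blast
qed

lemma H_complete_qfree:
  assumes "qfree A" and valid: "\<And>r :: nat \<Rightarrow> nat \<Rightarrow> bool. H_axioms r \<Longrightarrow> eval r id A"
  shows "H A"
proof -
  obtain vs where vs: "set vs = free A"
    using finite_list[OF finite_free] by blast
  have "eval r id (impls (axiom_instances vs) A)" for r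
  proof (unfold eval_impls, intro impI)
    assume "\<forall>B\<in>set (axiom_instances vs). eval r id B"
    then have "H_axioms_on (set vs) r"
      by (rule H_axioms_on_if_eval_axiom_instances)
    let ?r = "\<lambda>a b. a \<in> set vs \<and> b \<in> set vs \<and> r a b"
    have "eval ?r id A"
      using valid H_axioms_restrict[OF \<open>H_axioms_on (set vs) r\<close>] by blast
    then show "eval r id A"
      using eval_qfree_cong[OF assms(1), of ?r id r id] vs by simp
  qed
  then have "H (impls (axiom_instances vs) A)"
    by (intro H_valid_qfree qfree_impls qfree_axiom_instances assms(1))
  then show ?thesis
    using H_impls_mp H_axiom_instances by blast
qed

theorem theorem6p5:
  assumes "qfree A" and "thmL A"
  shows "H A"
proof (rule H_complete_qfree[OF assms(1)])
  fix r :: "nat \<Rightarrow> nat \<Rightarrow> bool"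
  assume "H_axioms r"
  have "eval singleton_mem (set_repr r) A"
    using thmL_sound[OF assms(2) ontology_model_singleton_mem] .
  then show "eval r id A"
    using eval_qfree_cong[OF assms(1), of singleton_mem "set_repr r" r id]
      singleton_mem_set_repr[OF \<open>H_axioms r\<close>] by simp
qed

end
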